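(* Let $n\ge 3$ and let $DW_n$ be the double wheel graph. Then $$\chi^+(DW_n)=\begin{cases}5n+1 & \text{if } n \text{ is even},\\ 7n-2 & \text{if } n \text{ is odd}.\end{cases}$$
   Context: The double wheel graph $DW_n=2C_n+K_1$ is obtained from the disjoint union of two cycles $C_n$ by adding one new vertex adjacent to every vertex of both cycles. For a proper colouring $c:V(G)\to\{1,\dots,k\}$ of a graph $G$ (colour $c_i$ identified with the integer $i$), its colouring sum is $\sum_{i=1}^k i\,\theta(c_i)=\sum_{v\in V(G)} c(v)$, where $\theta(c_i)$ is the number of vertices receiving colour $c_i$. The $\chi^+$-chromatic sum $\chi^+(G)$ is the maximum of the colouring sum over all proper colourings of $G$ using exactly $\chi(G)$ colours (the chromatic number), i.e. over all proper colourings $c:V(G)\to\{1,\dots,\chi(G)\}$. *)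

theory Defs
  imports Main
begin

definition proper_colouring :: "'a set \<Rightarrow> ('a \<Rightarrow> 'a \<Rightarrow> bool) \<Rightarrow> nat \<Rightarrow> ('a \<Rightarrow> nat) \<Rightarrow> bool" where
  "proper_colouring V E k c \<longleftrightarrow>
     (\<forall>v\<in>V. c v \<in> {1..k}) \<and> (\<forall>u\<in>V. \<forall>v\<in>V. E u v \<longrightarrow> c u \<noteq> c v)"

definition chromatic_number :: "'a set \<Rightarrow> ('a \<Rightarrow> 'a \<Rightarrow> bool) \<Rightarrow> nat" where
  "chromatic_number V E = (LEAST k. \<exists>c. proper_colouring V E k c)"

definition chi_plus :: "'a set \<Rightarrow> ('a \<Rightarrow> 'a \<Rightarrow> bool) \<Rightarrow> nat" where
  "chi_plus V E = Max {(\<Sum>v\<in>V. c v) | c. proper_colouring V E (chromatic_number V E) c}"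

text \<open>Double wheel DW_n: hub None, cycle vertices Some (b, i) with b selecting the cycle, i < n.\<close>
definition dw_vertices :: "nat \<Rightarrow> (bool \<times> nat) option set" where
  "dw_vertices n = {None} \<union> {Some (b, i) | b i. i < n}"

definition dw_adj :: "nat \<Rightarrow> (bool \<times> nat) option \<Rightarrow> (bool \<times> nat) option \<Rightarrow> bool" where
  "dw_adj n u v = (case (u, v) of
      (None, None) \<Rightarrow> False
    | (None, Some _) \<Rightarrow> True
    | (Some _, None) \<Rightarrow> True
    | (Some (b, i), Some (b', j)) \<Rightarrow>
        b = b' \<and> (j = (i + 1) mod n \<or> i = (j + 1) mod n))"

end

theory Submission
  imports Defs
begin

text \<open>The hub is adjacent to every other vertex, so its colour h is missing from both cycles, and a
  colour class of a cycle C_n is independent, hence has at most n div 2 vertices. Distributing the n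
  vertices of a cycle over the remaining k - 1 classes forces k \<ge> 3, and k \<ge> 4 for odd n. For the
  maximal sum, a cycle can at best fill the largest colours other than h up to n div 2 each;
  comparing the possible hub colours shows that h = 1 is optimal, and the alternating colourings
  2,3,2,3,... resp. 4,3,...,4,3,2 of both cycles with hub colour 1 attain the bound.\<close>

lemma two_card_le_if_successor_free:
  fixes I :: "nat set"
  assumes "I \<subseteq> {..<n}" and "\<And>i. i \<in> I \<Longrightarrow> (i + 1) mod n \<notin> I"
  shows "2 * card I \<le> n"
proof -
  let ?succ = "\<lambda>i. (i + 1) mod n"
  have "inj_on ?succ {..<n}"
    by (auto simp: inj_on_def mod_Suc split: if_splits)
  then have "2 * card I = card I + card (?succ ` I)"
    using assms(1) by (simp add: card_image inj_on_subset)
  also have "\<dots> = card (I \<union> ?succ ` I)"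
    using assms finite_subset by (intro card_Un_disjoint[symmetric]) auto
  also have "\<dots> \<le> card {..<n}"
    using assms(1) by (intro card_mono) (auto intro!: mod_less_divisor)
  finally show ?thesis
    by simp
qed

locale hub_avoiding_cycle_colouring =
  fixes n k h :: nat and f :: "nat \<Rightarrow> nat"
  assumes n_pos: "0 < n"
    and hub_colour: "h \<in> {1..k}"
    and colour_range: "\<And>i. i < n \<Longrightarrow> f i \<in> {1..k}"
    and avoids_hub: "\<And>i. i < n \<Longrightarrow> f i \<noteq> h"
    and adjacent_distinct: "\<And>i. i < n \<Longrightarrow> f i \<noteq> f ((i + 1) mod n)"
begin

definition class_size :: "nat \<Rightarrow> nat" where
  "class_size j = card {i \<in> {..<n}. f i = j}"

lemma two_class_size_le: "2 * class_size j \<le> n"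
  unfolding class_size_def using adjacent_distinct
  by (intro two_card_le_if_successor_free) (force intro: n_pos)+

lemma two_class_size_less_if_odd: "odd n \<Longrightarrow> 2 * class_size j < n"
  using two_class_size_le[of j] by (metis dvd_triv_left le_neq_implies_less)

lemma colours_of_cycle: "f ` {..<n} \<subseteq> {1..k}"
  using colour_range by blast

lemma class_size_le_half: "class_size j \<le> n div 2"
  using two_class_size_le[of j] by linarith

lemma class_size_hub: "class_size h = 0"
  unfolding class_size_def using avoids_hub by auto

lemma sum_class_size: "(\<Sum>j\<in>{1..k}. class_size j) = n"
  using sum.group[OF _ _ colours_of_cycle, of "\<lambda>_. 1::nat"] unfolding class_size_def by simp

lemma colour_sum_eq: "(\<Sum>i<n. f i) = (\<Sum>j\<in>{1..k}. j * class_size j)"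
proof -
  have "(\<Sum>i<n. f i) = (\<Sum>j\<in>{1..k}. \<Sum>i\<in>{i \<in> {..<n}. f i = j}. f i)"
    using sum.group[OF _ _ colours_of_cycle, of f] by simp
  also have "\<dots> = (\<Sum>j\<in>{1..k}. j * class_size j)"
    unfolding class_size_def by (intro sum.cong) auto
  finally show ?thesis .
qed

lemma n_le_colours_times_half: "n \<le> (k - 1) * (n div 2)"
proof -
  have "n = (\<Sum>j\<in>{1..k} - {h}. class_size j)"
    using sum_class_size sum.remove[of "{1..k}" h class_size] hub_colour class_size_hub by simp
  also have "\<dots> \<le> card ({1..k} - {h}) * (n div 2)"
    using sum_bounded_above[of "{1..k} - {h}" class_size "n div 2"] class_size_le_half by simp
  also have "card ({1..k} - {h}) = k - 1"
    using hub_colour by simp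
  finally show ?thesis .
qed

lemma three_le_colours: "3 \<le> k"
proof (rule ccontr)
  assume "\<not> 3 \<le> k"
  then have "k - 1 \<le> 1"
    by linarith
  then have "(k - 1) * (n div 2) \<le> n div 2"
    using mult_le_mono1 by fastforce
  then show False
    using n_le_colours_times_half n_pos by linarith
qed

lemma four_le_colours_if_odd:
  assumes "odd n"
  shows "4 \<le> k"
proof (rule ccontr)
  assume "\<not> 4 \<le> k"
  then have "k - 1 \<le> 2"
    by linarith
  then have "(k - 1) * (n div 2) \<le> 2 * (n div 2)"
    by (rule mult_le_mono1)
  moreover have "2 * (n div 2) + 1 = n"
    using assms by (rule odd_two_times_div_two_succ)
  ultimately show False
    using n_le_colours_times_half by linarith
qed

text \<open>The bounds are stated for h + 2 \<Sigma> f because the double wheel's sum is h plus the sums of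
  its two cycles, each of which is a hub-avoiding cycle colouring with the same h.\<close>

lemma colour_sum_bound_3:
  assumes "k = 3"
  shows "2 * (\<Sum>i<n. f i) + h \<le> 5 * n + 1"
proof -
  have colours: "{1..k} = {1, 2, 3}"
    using assms by auto
  then have sizes: "class_size 1 + class_size 2 + class_size 3 = n"
    and sum: "(\<Sum>i<n. f i) = class_size 1 + 2 * class_size 2 + 3 * class_size 3"
    using sum_class_size colour_sum_eq by simp_all
  note capacity = two_class_size_le[of 1] two_class_size_le[of 2] two_class_size_le[of 3]
  have "h \<in> {1, 2, 3}"
    using hub_colour colours by blast
  then show ?thesis
    using class_size_hub sizes sum capacity n_pos by auto
qed

lemma colour_sum_bound_4:
  assumes "k = 4" and "odd n"
  shows "2 * (\<Sum>i<n. f i) + h + 2 \<le> 7 * n"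
proof -
  have colours: "{1..k} = {1, 2, 3, 4}"
    using assms by auto
  then have sizes: "class_size 1 + class_size 2 + class_size 3 + class_size 4 = n"
    and sum: "(\<Sum>i<n. f i) = class_size 1 + 2 * class_size 2 + 3 * class_size 3 + 4 * class_size 4"
    using sum_class_size colour_sum_eq by simp_all
  note capacity = two_class_size_less_if_odd[OF assms(2), of 1] two_class_size_less_if_odd[OF assms(2), of 2]
    two_class_size_less_if_odd[OF assms(2), of 3] two_class_size_less_if_odd[OF assms(2), of 4]
  have "h \<in> {1, 2, 3, 4}"
    using hub_colour colours by blast
  then show ?thesis
    using class_size_hub sizes sum capacity n_pos by auto
qed

end

lemma chromatic_number_eqI:
  assumes "proper_colouring V E k c" and "\<And>k' c'. proper_colouring V E k' c' \<Longrightarrow> k \<le> k'"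
  shows "chromatic_number V E = k"
  unfolding chromatic_number_def using assms by (intro Least_equality) auto

lemma chi_plus_eqI:
  assumes "chromatic_number V E = k" and "proper_colouring V E k c" and "sum c V = s"
    and "\<And>c'. proper_colouring V E k c' \<Longrightarrow> sum c' V \<le> s"
  shows "chi_plus V E = s"
proof -
  let ?sums = "{(\<Sum>v\<in>V. c v) | c. proper_colouring V E k c}"
  have "finite ?sums"
    by (rule finite_subset[of _ "{..s}"]) (use assms(4) in auto)
  then show ?thesis
    unfolding chi_plus_def assms(1) by (rule Max_eqI) (use assms(2-4) in auto)
qed

lemma sum_dw_vertices:
  "sum g (dw_vertices n) = g None + (\<Sum>i<n. g (Some (True, i))) + (\<Sum>i<n. g (Some (False, i)))"
proof -
  have vertices: "dw_vertices n = insert None (Some ` (Pair True ` {..<n} \<union> Pair False ` {..<n}))"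
    unfolding dw_vertices_def by auto
  have "sum g (Some ` (Pair True ` {..<n} \<union> Pair False ` {..<n}))
      = sum (g \<circ> Some) (Pair True ` {..<n}) + sum (g \<circ> Some) (Pair False ` {..<n})"
    by (subst sum.reindex) (auto intro: sum.union_disjoint)
  also have "\<dots> = (\<Sum>i<n. g (Some (True, i))) + (\<Sum>i<n. g (Some (False, i)))"
    by (simp add: sum.reindex inj_on_def)
  finally show ?thesis
    unfolding vertices by (subst sum.insert) (auto simp: add.assoc)
qed

lemma dw_cycle_colouring:
  assumes "proper_colouring (dw_vertices n) (dw_adj n) k c" and "0 < n"
  shows "hub_avoiding_cycle_colouring n k (c None) (\<lambda>i. c (Some (b, i)))"
proof -
  have "None \<in> dw_vertices n" and "\<And>i. i < n \<Longrightarrow> Some (b, i) \<in> dw_vertices n"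
    by (auto simp: dw_vertices_def)
  moreover have "dw_adj n (Some (b, i)) None" and "dw_adj n (Some (b, i)) (Some (b, (i + 1) mod n))" for i
    by (auto simp: dw_adj_def)
  ultimately show ?thesis
    using assms unfolding proper_colouring_def hub_avoiding_cycle_colouring_def
    by (metis mod_less_divisor)
qed

definition dw_colouring :: "nat \<Rightarrow> (nat \<Rightarrow> nat) \<Rightarrow> (bool \<times> nat) option \<Rightarrow> nat" where
  "dw_colouring h f v = (case v of None \<Rightarrow> h | Some (_, i) \<Rightarrow> f i)"

lemma sum_dw_colouring: "sum (dw_colouring h f) (dw_vertices n) = h + 2 * (\<Sum>i<n. f i)"
  by (simp add: sum_dw_vertices dw_colouring_def)

lemma (in hub_avoiding_cycle_colouring) proper_dw_colouring:
  "proper_colouring (dw_vertices n) (dw_adj n) k (dw_colouring h f)"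
  unfolding proper_colouring_def
proof (intro conjI ballI impI)
  fix v assume "v \<in> dw_vertices n"
  then show "dw_colouring h f v \<in> {1..k}"
    using hub_colour colour_range by (auto simp: dw_vertices_def dw_colouring_def)
next
  fix u v assume "u \<in> dw_vertices n" "v \<in> dw_vertices n" "dw_adj n u v"
  then show "dw_colouring h f u \<noteq> dw_colouring h f v"
    using avoids_hub adjacent_distinct
    by (auto simp: dw_vertices_def dw_adj_def dw_colouring_def) metis+
qed

lemma dw_colours_lower_bound:
  assumes "proper_colouring (dw_vertices n) (dw_adj n) k c" and "0 < n"
  shows "3 \<le> k" and "odd n \<Longrightarrow> 4 \<le> k"
  using hub_avoiding_cycle_colouring.three_le_colours hub_avoiding_cycle_colouring.four_le_colours_if_odd
    dw_cycle_colouring[OF assms] by blast+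

lemma dw_colour_sum_bound_3:
  assumes "proper_colouring (dw_vertices n) (dw_adj n) 3 c" and "0 < n"
  shows "sum c (dw_vertices n) \<le> 5 * n + 1"
  using hub_avoiding_cycle_colouring.colour_sum_bound_3[OF dw_cycle_colouring[OF assms, of True]]
    hub_avoiding_cycle_colouring.colour_sum_bound_3[OF dw_cycle_colouring[OF assms, of False]]
  unfolding sum_dw_vertices by linarith

lemma dw_colour_sum_bound_4:
  assumes "proper_colouring (dw_vertices n) (dw_adj n) 4 c" and "odd n"
  shows "sum c (dw_vertices n) \<le> 7 * n - 2"
proof -
  have "0 < n"
    using assms(2) by (rule odd_pos)
  note cycle_bound = hub_avoiding_cycle_colouring.colour_sum_bound_4[OF dw_cycle_colouring[OF assms(1) this] _ assms(2)]
  show ?thesis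
    using cycle_bound[of True] cycle_bound[of False] unfolding sum_dw_vertices by linarith
qed

lemma sum_alternating: "(\<Sum>i<2 * m. if even i then a else b) = m * (a + b :: nat)"
  by (induction m) (auto simp: algebra_simps)

lemma even_cycle_colouring:
  assumes "even n" and "0 < n"
  shows "hub_avoiding_cycle_colouring n 3 1 (\<lambda>i. if even i then 2 else 3)"
  using assms by unfold_locales (auto simp: mod_Suc)

lemma odd_cycle_colouring:
  assumes "odd n" and "3 \<le> n"
  shows "hub_avoiding_cycle_colouring n 4 1 (\<lambda>i. if i = n - 1 then 2 else if even i then 4 else 3)"
    (is "hub_avoiding_cycle_colouring n 4 1 ?f")
proof
  fix i assume "i < n"
  show "?f i \<noteq> ?f ((i + 1) mod n)"
  proof (cases "i + 1 = n")
    case True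
    then show ?thesis using assms(2) by auto
  next
    case False
    with \<open>i < n\<close> have "(i + 1) mod n = i + 1"
      by simp
    moreover have "odd i" if "i + 1 = n - 1"
      using that assms(1) by presburger
    ultimately show ?thesis
      using False by auto
  qed
qed (use assms in auto)

lemma sum_odd_cycle_colouring:
  fixes m :: nat
  assumes "n = 2 * m + 1"
  shows "(\<Sum>i<n. if i = n - 1 then 2 else if even i then 4 else 3) = 7 * m + 2"
proof -
  have "(\<Sum>i<n. if i = n - 1 then 2 else if even i then 4 else 3)
      = (\<Sum>i<2 * m. if i = 2 * m then 2 else if even i then 4 else 3) + (2::nat)"
    using assms by simp
  also have "(\<Sum>i<2 * m. if i = 2 * m then 2 else if even i then 4 else 3)
      = (\<Sum>i<2 * m. if even i then 4 else 3)"
    by (rule sum.cong) auto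
  finally show ?thesis
    using sum_alternating[where m = m and a = 4 and b = 3] by simp
qed

theorem proposition2p2:
  fixes n :: nat
  assumes "n \<ge> 3"
  shows "chi_plus (dw_vertices n) (dw_adj n) = (if even n then 5 * n + 1 else 7 * n - 2)"
proof (cases "even n")
  case True
  let ?f = "\<lambda>i. if even i then 2 else 3"
  interpret hub_avoiding_cycle_colouring n 3 1 ?f
    by (rule even_cycle_colouring) (use True assms in auto)
  have "chromatic_number (dw_vertices n) (dw_adj n) = 3"
    by (rule chromatic_number_eqI[OF proper_dw_colouring]) (erule dw_colours_lower_bound(1)[OF _ n_pos])
  moreover have "sum (dw_colouring 1 ?f) (dw_vertices n) = 5 * n + 1"
    using True sum_alternating[where m = "n div 2" and a = 2 and b = 3] by (simp add: sum_dw_colouring)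
  ultimately show ?thesis
    using True proper_dw_colouring dw_colour_sum_bound_3 n_pos by (simp add: chi_plus_eqI)
next
  case False
  let ?f = "\<lambda>i. if i = n - 1 then 2 else if even i then 4 else 3"
  interpret hub_avoiding_cycle_colouring n 4 1 ?f
    using odd_cycle_colouring False assms .
  have "chromatic_number (dw_vertices n) (dw_adj n) = 4"
    by (rule chromatic_number_eqI[OF proper_dw_colouring]) (erule dw_colours_lower_bound(2)[OF _ n_pos False])
  moreover have "sum (dw_colouring 1 ?f) (dw_vertices n) = 7 * n - 2"
  proof -
    obtain m where "n = 2 * m + 1"
      using False oddE by blast
    then show ?thesis
      using sum_odd_cycle_colouring by (simp add: sum_dw_colouring)
  qed
  ultimately show ?thesis
    using False proper_dw_colouring dw_colour_sum_bound_4 by (simp add: chi_plus_eqI)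
qed

end
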